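(* Let $(G;+,\cdot)$ be a nonassociative right semiring, $n \geq 4$, and let $f, g \colon G^n \to G$ be affine functions over $(G;+,\cdot)$. If $f$ and $g$ are both linear, or if $(G;+,\cdot)$ is cancellative, then $\operatorname{deck} f = \operatorname{deck} g$ if and only if $f \equiv g$. In particular, the class of linear functions of arity at least $4$ over any nonassociative right semiring is weakly reconstructible, and if the semiring is cancellative, the class of affine functions of arity at least $4$ over it is weakly reconstructible.
   Context: A nonassociative right semiring is an algebra $(G;+,\cdot)$ such that $(G;+)$ is a commutative monoid with neutral element $0$; $(G;\cdot)$ is a groupoid (not necessarily associative) with right identity $1$; $(a+b)c = ac+bc$; and $a\cdot 0 = 0$. It is cancellative if $a+b=a+c$ implies $b=c$. A function $f\colon G^n\to G$ is affine if $f(x_1,\dots,x_n) = a_1x_1+\dots+a_nx_n+c$ for some $a_i,c\in G$; linear if this holds with $c=0$. Identification minor: for $f\colon A^n\to B$ and $I=\{i,j\}$, $i<j$, $f_I\colon A^{n-1}\to B$ is $f_I(x_1,\dots,x_{n-1}) = f(x_1,\dots,x_{j-1},x_i,x_j,\dots,x_{n-1})$. Two functions $f,g\colon A^n\to B$ are equivalent, $f\equiv g$, if $f(x_1,\dots,x_n) = g(x_{\sigma(1)},\dots,x_{\sigma(n)})$ for some permutation $\sigma$ of $\{1,\dots,n\}$. The deck of $f$ is the multiset $\langle f_I/{\equiv} : I \in \binom{[n]}{2}\rangle$ of equivalence classes of its $\binom n2$ identification minors. A class $\mathcal{C}$ of functions is weakly reconstructible if for every $f\in\mathcal{C}$, every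 $g \in \mathcal{C}$ of the same arity with $\operatorname{deck} g = \operatorname{deck} f$ satisfies $g \equiv f$. *)

theory Defs
  imports "HOL-Library.Multiset" "HOL-Combinatorics.Permutations"
begin

definition nars :: "('a \<Rightarrow> 'a \<Rightarrow> 'a) \<Rightarrow> ('a \<Rightarrow> 'a \<Rightarrow> 'a) \<Rightarrow> 'a \<Rightarrow> 'a \<Rightarrow> bool" where
  "nars add mul z e \<longleftrightarrow>
     (\<forall>a b c. add (add a b) c = add a (add b c)) \<and>
     (\<forall>a b. add a b = add b a) \<and>
     (\<forall>a. add a z = a) \<and>
     (\<forall>a. mul a e = a) \<and>
     (\<forall>a b c. mul (add a b) c = add (mul a c) (mul b c)) \<and>
     (\<forall>a. mul a z = z)"

definition cancellative :: "('a \<Rightarrow> 'a \<Rightarrow> 'a) \<Rightarrow> bool" where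
  "cancellative add \<longleftrightarrow> (\<forall>a b c. add a b = add a c \<longrightarrow> b = c)"

definition lsum :: "('a \<Rightarrow> 'a \<Rightarrow> 'a) \<Rightarrow> 'a \<Rightarrow> 'a list \<Rightarrow> 'a" where
  "lsum add z xs = foldr add xs z"

text \<open>n-ary functions G^n \<rightarrow> G are represented as functions on lists; only their
  values on lists of length n matter.\<close>
definition affine :: "('a \<Rightarrow> 'a \<Rightarrow> 'a) \<Rightarrow> ('a \<Rightarrow> 'a \<Rightarrow> 'a) \<Rightarrow> 'a \<Rightarrow> nat \<Rightarrow> ('a list \<Rightarrow> 'a) \<Rightarrow> bool" where
  "affine add mul z n f \<longleftrightarrow> (\<exists>a c. \<forall>xs. length xs = n \<longrightarrow>
      f xs = add (lsum add z (map (\<lambda>k. mul (a k) (xs ! k)) [0..<n])) c)"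

definition linear_fun :: "('a \<Rightarrow> 'a \<Rightarrow> 'a) \<Rightarrow> ('a \<Rightarrow> 'a \<Rightarrow> 'a) \<Rightarrow> 'a \<Rightarrow> nat \<Rightarrow> ('a list \<Rightarrow> 'a) \<Rightarrow> bool" where
  "linear_fun add mul z n f \<longleftrightarrow> (\<exists>a. \<forall>xs. length xs = n \<longrightarrow>
      f xs = lsum add z (map (\<lambda>k. mul (a k) (xs ! k)) [0..<n]))"

text \<open>Identification minor f_I for I = {i,j}, i < j (0-indexed):
  f_I(x_0..x_{n-2}) = f(x_0..x_{j-1}, x_i, x_j, ..., x_{n-2}).\<close>
definition minor :: "('a list \<Rightarrow> 'b) \<Rightarrow> nat \<Rightarrow> nat \<Rightarrow> 'a list \<Rightarrow> 'b" where
  "minor f i j xs = f (take j xs @ [xs ! i] @ drop j xs)"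

definition fequiv :: "nat \<Rightarrow> ('a list \<Rightarrow> 'b) \<Rightarrow> ('a list \<Rightarrow> 'b) \<Rightarrow> bool" where
  "fequiv n f g \<longleftrightarrow> (\<exists>\<sigma>. \<sigma> permutes {..<n} \<and>
      (\<forall>xs. length xs = n \<longrightarrow> f xs = g (map (\<lambda>i. xs ! \<sigma> i) [0..<n])))"

definition fclass :: "nat \<Rightarrow> ('a list \<Rightarrow> 'b) \<Rightarrow> ('a list \<Rightarrow> 'b) set" where
  "fclass n f = {h. fequiv n f h}"

definition deck :: "nat \<Rightarrow> ('a list \<Rightarrow> 'b) \<Rightarrow> ('a list \<Rightarrow> 'b) set multiset" where
  "deck n f = image_mset (\<lambda>(i, j). fclass (n - 1) (minor f i j))
                (mset_set {(i, j). i < j \<and> j < n})"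

end

theory Submission
  imports Defs
begin

text \<open>An affine function is determined up to equivalence by the multiset of its coefficients and
  its constant: the constant is its value at the zero vector, and the coefficients are read off at
  unit vectors (this is where linearity or cancellativity is needed). By right distributivity,
  identifying the arguments i and j replaces the coefficients a_i, a_j by the single coefficient
  a_i + a_j, so the deck of f carries exactly the same information as the constant together with
  the multiset of these "merged" coefficient multisets.

  It remains to show that, for n \<ge> 4 and in any commutative monoid, the multiset of merged
  coefficient multisets determines the multiset of coefficients. Match the coefficients of f and g
  by a permutation with the largest number of agreements; then no value of f at a mismatched
  position J occurs as a value of g at a mismatched position. Summing all cards, every coefficient
  occurs C(n-1,2) times, so C(n-1,2) copies of the mismatched values of f must be merged values of
  g on pairs meeting J. Counting pairs forces n = 4 and |J| = 1. In that case, writing x and y for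
  the two mismatched coefficients, x + c = y and y + c = x for each of the three other
  coefficients c, so the coefficient sums of f and g are y and x. But the coefficient sum is the
  sum of any card, hence a deck invariant, a contradiction.\<close>

lemma fequiv_iff_permute_list:
  "fequiv n f g \<longleftrightarrow>
     (\<exists>\<sigma>. \<sigma> permutes {..<n} \<and> (\<forall>xs. length xs = n \<longrightarrow> f xs = g (permute_list \<sigma> xs)))"
proof -
  have "(\<forall>xs. length xs = n \<longrightarrow> f xs = g (map (\<lambda>i. xs ! \<sigma> i) [0..<n]))
      \<longleftrightarrow> (\<forall>xs. length xs = n \<longrightarrow> f xs = g (permute_list \<sigma> xs))" for \<sigma>
    by (auto simp: permute_list_def)
  then show ?thesis
    unfolding fequiv_def by blast
qed

lemma fequiv_refl: "fequiv n f f"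
  unfolding fequiv_iff_permute_list by (intro exI[of _ id]) (simp add: permutes_id)

lemma fequiv_sym:
  assumes "fequiv n f g"
  shows "fequiv n g f"
proof -
  obtain \<sigma> where \<sigma>: "\<sigma> permutes {..<n}" "\<And>xs. length xs = n \<Longrightarrow> f xs = g (permute_list \<sigma> xs)"
    using assms unfolding fequiv_iff_permute_list by blast
  have "g ys = f (permute_list (inv \<sigma>) ys)" if "length ys = n" for ys
  proof -
    have "permute_list \<sigma> (permute_list (inv \<sigma>) ys) = ys"
      using that \<sigma>(1) permute_list_compose[of \<sigma> ys "inv \<sigma>"]
      by (simp add: permutes_inv_o(2)[OF \<sigma>(1)])
    then show ?thesis
      using \<sigma>(2)[of "permute_list (inv \<sigma>) ys"] that by simp
  qed
  then show ?thesis
    unfolding fequiv_iff_permute_list using permutes_inv[OF \<sigma>(1)]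
    by (intro exI[of _ "inv \<sigma>"]) simp
qed

lemma fequiv_trans:
  assumes "fequiv n f g" "fequiv n g h"
  shows "fequiv n f h"
proof -
  obtain \<sigma> where \<sigma>: "\<sigma> permutes {..<n}" "\<And>xs. length xs = n \<Longrightarrow> f xs = g (permute_list \<sigma> xs)"
    using assms(1) unfolding fequiv_iff_permute_list by blast
  obtain \<rho> where \<rho>: "\<rho> permutes {..<n}" "\<And>xs. length xs = n \<Longrightarrow> g xs = h (permute_list \<rho> xs)"
    using assms(2) unfolding fequiv_iff_permute_list by blast
  have "f xs = h (permute_list (\<sigma> \<circ> \<rho>) xs)" if "length xs = n" for xs
  proof -
    have "f xs = h (permute_list \<rho> (permute_list \<sigma> xs))"
      using that by (simp add: \<sigma>(2) \<rho>(2))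
    also have "permute_list \<rho> (permute_list \<sigma> xs) = permute_list (\<sigma> \<circ> \<rho>) xs"
      using that \<rho>(1) by (simp add: permute_list_compose)
    finally show ?thesis .
  qed
  then show ?thesis
    unfolding fequiv_iff_permute_list using permutes_compose[OF \<rho>(1) \<sigma>(1)]
    by (intro exI[of _ "\<sigma> \<circ> \<rho>"]) simp
qed

lemma fclass_eq:
  assumes "fequiv n f g"
  shows "fclass n f = fclass n g"
  unfolding fclass_def using fequiv_trans[OF fequiv_sym[OF assms]] fequiv_trans[OF assms] by auto

lemma image_mset_eq_iff_inj_on:
  assumes "inj_on f A" "set_mset M \<subseteq> A" "set_mset N \<subseteq> A"
  shows "image_mset f M = image_mset f N \<longleftrightarrow> M = N"
proof
  have inverse: "image_mset (inv_into A f) (image_mset f K) = K" if "set_mset K \<subseteq> A" for K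
    using that assms(1) by (simp add: multiset.map_comp image_mset_cong[of K _ id] subset_iff)
  assume eq: "image_mset f M = image_mset f N"
  have "M = image_mset (inv_into A f) (image_mset f M)"
    using inverse[OF assms(2)] by (rule sym)
  also have "\<dots> = N"
    unfolding eq by (rule inverse[OF assms(3)])
  finally show "M = N" .
qed simp

lemma repeat_mset_subseteq_of_eq:
  assumes "repeat_mset k A + X = repeat_mset k B + Y" "set_mset A \<inter> set_mset B = {}"
  shows "repeat_mset k A \<subseteq># Y"
proof (rule mset_subset_eqI)
  fix v
  have "k * count A v + count X v = k * count B v + count Y v"
    using arg_cong[OF assms(1), of "\<lambda>M. count M v"] by simp
  moreover have "count A v = 0 \<or> count B v = 0"
    using assms(2) by (auto simp: count_eq_zero_iff)
  ultimately show "count (repeat_mset k A) v \<le> count Y v"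
    by auto
qed

lemma image_mset_repeat_mset: "image_mset f (repeat_mset k M) = repeat_mset k (image_mset f M)"
  by (induction k) auto

section \<open>Decks of merged coefficient multisets\<close>

lemma choose_two_times_bound:
  fixes n r :: nat
  assumes "4 \<le> n" "1 \<le> r" "r \<le> n" "((n - 1) choose 2) * r \<le> (n choose 2) - ((n - r) choose 2)"
  shows "n = 4 \<and> r = 1"
proof -
  have double_choose: "2 * (k choose 2) = k * (k - 1)" for k :: nat
  proof (induction k)
    case (Suc k)
    then show ?case
      by (cases k) (auto simp: numeral_2_eq_2 algebra_simps)
  qed simp
  obtain m where m: "n = m + r"
    using assms(3) by (metis le_add_diff_inverse2)
  have "(m + r) * (m + r - 1) + r * r = m * (m - 1) + 2 * (r * (m + r - 1)) + r"
    using assms(2) by (cases m; cases r) (simp_all add: algebra_simps)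
  moreover have "r \<le> r * r"
    using assms(2) by simp
  ultimately have "2 * (n choose 2) \<le> 2 * (m choose 2) + 2 * (r * (n - 1))"
    unfolding double_choose m by linarith
  then have "(n choose 2) - (m choose 2) \<le> r * (n - 1)"
    by linarith
  moreover have "n - r = m"
    using m by simp
  ultimately have "((n - 1) choose 2) * r \<le> r * (n - 1)"
    using assms(4) by (simp only:)
  then have "2 * ((n - 1) choose 2) \<le> 2 * (n - 1)"
    using assms(2) by (simp add: mult.commute)
  then have bound: "(n - 1) * (n - 1 - 1) \<le> 2 * (n - 1)"
    unfolding double_choose .
  have "n \<le> 4"
  proof (rule ccontr)
    assume "\<not> n \<le> 4"
    then have "(n - 1) * 3 \<le> (n - 1) * (n - 1 - 1)"
      by (intro mult_le_mono2) linarith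
    with bound assms(1) show False
      by linarith
  qed
  then have "n = 4"
    using assms(1) by simp
  moreover have "r = 1 \<or> r = 2 \<or> r = 3 \<or> r = 4"
    using assms(2,3) \<open>n = 4\<close> by linarith
  then have "r = 1"
    using assms(4) \<open>n = 4\<close> by (elim disjE) (simp_all add: choose_two)
  ultimately show ?thesis
    by simp
qed

text \<open>Take a matching with the largest number of agreements: if a value of \<open>a\<close> at a mismatched
  position occurred as a value of \<open>b \<circ> \<tau>\<close> at another mismatched position, a transposition
  would create one more agreement.\<close>

lemma exists_permutes_mismatches_disjoint:
  fixes a b :: "nat \<Rightarrow> 'b"
  obtains \<tau> where "\<tau> permutes {..<n}"
    and "\<And>k l. k < n \<Longrightarrow> l < n \<Longrightarrow> a k \<noteq> b (\<tau> k) \<Longrightarrow> a l \<noteq> b (\<tau> l) \<Longrightarrow> a k \<noteq> b (\<tau> l)"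
proof -
  define agreement where "agreement \<tau> = card {k \<in> {..<n}. a k = b (\<tau> k)}" for \<tau>
  have "agreement \<tau> < Suc n" for \<tau>
  proof -
    have "agreement \<tau> \<le> card {..<n}"
      unfolding agreement_def by (rule card_mono) auto
    then show ?thesis
      by simp
  qed
  then obtain \<tau> where \<tau>: "\<tau> permutes {..<n}"
    and maximal: "\<And>\<sigma>. \<sigma> permutes {..<n} \<Longrightarrow> agreement \<sigma> \<le> agreement \<tau>"
    using ex_has_greatest_nat[of "\<lambda>\<sigma>. \<sigma> permutes {..<n}" id agreement "Suc n"] permutes_id
    by blast
  show thesis
  proof (rule that[OF \<tau>])
    fix k l
    assume kl: "k < n" "l < n" "a k \<noteq> b (\<tau> k)" "a l \<noteq> b (\<tau> l)"
    show "a k \<noteq> b (\<tau> l)"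
    proof
      assume swap_matches: "a k = b (\<tau> l)"
      define \<sigma> where "\<sigma> = \<tau> \<circ> transpose k l"
      have \<sigma>: "\<sigma> permutes {..<n}"
        unfolding \<sigma>_def using permutes_compose[OF permutes_swap_id \<tau>] kl by auto
      have "m \<noteq> k" "m \<noteq> l" if "a m = b (\<tau> m)" for m
        using kl that by auto
      then have "insert k {m \<in> {..<n}. a m = b (\<tau> m)} \<subseteq> {m \<in> {..<n}. a m = b (\<sigma> m)}"
        using kl swap_matches by (auto simp: \<sigma>_def transpose_apply_other)
      then have "card (insert k {m \<in> {..<n}. a m = b (\<tau> m)}) \<le> agreement \<sigma>"
        unfolding agreement_def by (rule card_mono[rotated]) simp
      then have "Suc (agreement \<tau>) \<le> agreement \<sigma>"
        using kl(3) unfolding agreement_def by simp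
      then show False
        using maximal[OF \<sigma>] by simp
    qed
  qed
qed

definition two_subsets :: "nat \<Rightarrow> nat set set" where
  "two_subsets n = {P. P \<subseteq> {..<n} \<and> card P = 2}"

lemma finite_two_subsets [simp]: "finite (two_subsets n)"
  by (rule finite_subset[of _ "Pow {..<n}"]) (auto simp: two_subsets_def)

lemma card_two_subsets: "card (two_subsets n) = n choose 2"
  unfolding two_subsets_def using n_subsets[of "{..<n}" 2] by simp

lemma two_subsetsE:
  assumes "P \<in> two_subsets n"
  obtains p q where "P = {p, q}" "p < q" "q < n"
proof -
  obtain x y where "P = {x, y}" "x \<noteq> y" "P \<subseteq> {..<n}"
    using assms unfolding two_subsets_def by (auto simp: card_2_iff)
  then show thesis
    using that[of x y] that[of y x] by (cases "x < y") (auto simp: insert_commute)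
qed

lemma finite_pairs: "finite {(i, j). i < j \<and> j < (n :: nat)}"
  by (rule finite_subset[of _ "{..<n} \<times> {..<n}"]) auto

lemma image_mset_pairs_eq_two_subsets:
  "image_mset (\<lambda>(i, j). g {i, j}) (mset_set {(i, j). i < j \<and> j < n})
     = image_mset g (mset_set (two_subsets n))"
proof -
  let ?pairs = "{(i, j). i < j \<and> j < n}" and ?set = "\<lambda>(i, j). {i, j :: nat}"
  have "inj_on ?set ?pairs"
    by (auto simp: inj_on_def doubleton_eq_iff)
  moreover have "?set ` ?pairs = two_subsets n"
  proof
    show "?set ` ?pairs \<subseteq> two_subsets n"
      by (auto simp: two_subsets_def)
    show "two_subsets n \<subseteq> ?set ` ?pairs"
      by (auto elim!: two_subsetsE intro: image_eqI[where x = "(p, q)" for p q])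
  qed
  ultimately have "mset_set (two_subsets n) = image_mset ?set (mset_set ?pairs)"
    by (simp add: image_mset_mset_set)
  moreover have "(\<lambda>(i, j). g {i, j}) = g \<circ> ?set"
    by (auto simp: fun_eq_iff)
  ultimately show ?thesis
    by (simp only: multiset.map_comp)
qed

lemma sum_mset_set_diff_two_subsets:
  "(\<Sum>P\<in>two_subsets n. mset_set ({..<n} - P)) = repeat_mset ((n - 1) choose 2) (mset_set {..<n})"
proof (rule multiset_eqI)
  fix k
  have "count (\<Sum>P\<in>two_subsets n. mset_set ({..<n} - P)) k
      = (\<Sum>P\<in>two_subsets n. if k \<in> {..<n} - P then 1 else 0)"
    unfolding count_sum by (rule sum.cong) (auto simp: count_mset_set')
  also have "\<dots> = card {P \<in> two_subsets n. k \<in> {..<n} - P}"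
    by (simp add: sum.If_cases Int_def)
  also have "\<dots> = count (repeat_mset ((n - 1) choose 2) (mset_set {..<n})) k"
  proof (cases "k < n")
    case True
    then have "{P \<in> two_subsets n. k \<in> {..<n} - P} = {P. P \<subseteq> {..<n} - {k} \<and> card P = 2}"
      unfolding two_subsets_def by auto
    moreover have "card ({..<n} - {k}) = n - 1"
      using True by simp
    ultimately show ?thesis
      using True by (simp add: n_subsets)
  next
    case False
    then show ?thesis
      by simp
  qed
  finally show "count (\<Sum>P\<in>two_subsets n. mset_set ({..<n} - P)) k
      = count (repeat_mset ((n - 1) choose 2) (mset_set {..<n})) k" .
qed

definition meeting :: "nat \<Rightarrow> nat set \<Rightarrow> nat set set" where
  "meeting n J = {P \<in> two_subsets n. P \<inter> J \<noteq> {}}"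

lemma finite_meeting [simp]: "finite (meeting n J)"
  by (simp add: meeting_def)

lemma card_meeting:
  assumes "J \<subseteq> {..<n}"
  shows "card (meeting n J) = (n choose 2) - ((n - card J) choose 2)"
proof -
  let ?avoiding = "{P. P \<subseteq> {..<n} - J \<and> card P = 2}"
  have "meeting n J = two_subsets n - ?avoiding" "?avoiding \<subseteq> two_subsets n"
    unfolding meeting_def two_subsets_def by auto
  then have "card (meeting n J) = card (two_subsets n) - card ?avoiding"
    by (simp add: card_Diff_subset finite_subset[OF _ finite_two_subsets])
  moreover have "card ({..<n} - J) = n - card J"
    using assms by (simp add: card_Diff_subset finite_subset)
  ultimately show ?thesis
    by (simp add: card_two_subsets n_subsets)
qed

lemma doubleton_in_two_subsets: "2 \<le> n \<Longrightarrow> {0, 1} \<in> two_subsets n"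
  by (auto simp: two_subsets_def)

text \<open>Argument \<open>k\<close> of \<open>minor f i j\<close> is passed to \<open>f\<close> at position \<open>skip j k\<close>; position \<open>j\<close>
  receives a second copy of argument \<open>i\<close>.\<close>

definition skip :: "nat \<Rightarrow> nat \<Rightarrow> nat" where
  "skip j k = (if k < j then k else Suc k)"

lemma inj_skip: "inj (skip j)"
  unfolding skip_def inj_def by auto

lemma skip_image:
  assumes "i < j" "j < n"
  shows "skip j ` ({..<n - 1} - {i}) = {..<n} - {i, j}"
proof
  show "skip j ` ({..<n - 1} - {i}) \<subseteq> {..<n} - {i, j}"
    using assms unfolding skip_def by auto
  show "{..<n} - {i, j} \<subseteq> skip j ` ({..<n - 1} - {i})"
  proof
    fix k
    assume k: "k \<in> {..<n} - {i, j}"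
    show "k \<in> skip j ` ({..<n - 1} - {i})"
    proof (cases "k < j")
      case True
      then show ?thesis
        using k assms by (intro image_eqI[of _ _ k]) (auto simp: skip_def)
    next
      case False
      then show ?thesis
        using k assms by (intro image_eqI[of _ _ "k - 1"]) (auto simp: skip_def)
    qed
  qed
qed

lemma nth_minor_arguments:
  assumes "i < j" "j \<le> length xs"
  shows "length (take j xs @ [xs ! i] @ drop j xs) = Suc (length xs)"
    and "k < length xs \<Longrightarrow> (take j xs @ [xs ! i] @ drop j xs) ! skip j k = xs ! k"
    and "(take j xs @ [xs ! i] @ drop j xs) ! i = xs ! i"
    and "(take j xs @ [xs ! i] @ drop j xs) ! j = xs ! i"
  using assms by (auto simp: skip_def nth_append min_def)

lemma mset_set_lessThan_remove2:
  fixes i j n :: nat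
  assumes "i < j" "j < n"
  shows "mset_set {..<n} = add_mset i (add_mset j (mset_set ({..<n} - {i, j})))"
proof -
  have "mset_set {..<n} = add_mset j (mset_set ({..<n} - {j}))"
    using assms by (simp add: mset_set.remove)
  also have "mset_set ({..<n} - {j}) = add_mset i (mset_set ({..<n} - {j} - {i}))"
    using assms by (simp add: mset_set.remove)
  also have "{..<n} - {j} - {i} = {..<n} - {i, j}"
    by auto
  finally show ?thesis
    by (simp add: add_mset_commute)
qed

context comm_monoid_mset
begin

definition merged :: "(nat \<Rightarrow> 'a) \<Rightarrow> nat set \<Rightarrow> 'a" where
  "merged a P = F (image_mset a (mset_set P))"

text \<open>For an affine function with coefficients \<open>a\<close>, \<open>merge_card a n {i, j}\<close> is the coefficient
  multiset of its identification minor for \<open>{i, j}\<close>.\<close>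

definition merge_card :: "(nat \<Rightarrow> 'a) \<Rightarrow> nat \<Rightarrow> nat set \<Rightarrow> 'a multiset" where
  "merge_card a n P = add_mset (merged a P) (image_mset a (mset_set ({..<n} - P)))"

definition merge_deck :: "(nat \<Rightarrow> 'a) \<Rightarrow> nat \<Rightarrow> 'a multiset multiset" where
  "merge_deck a n = image_mset (merge_card a n) (mset_set (two_subsets n))"

lemma merged_doubleton: "p \<noteq> q \<Longrightarrow> merged a {p, q} = a p \<^bold>* a q"
  by (simp add: merged_def)

lemma F_merge_card:
  assumes "P \<subseteq> {..<n}"
  shows "F (merge_card a n P) = F (image_mset a (mset_set {..<n}))"
proof -
  have "finite P"
    using assms finite_subset by blast
  then have "mset_set {..<n} = mset_set P + mset_set ({..<n} - P)"
    using assms mset_set_Union[of P "{..<n} - P"] by (simp add: Un_absorb1)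
  then show ?thesis
    by (simp add: merge_card_def merged_def)
qed

lemma merge_deck_cong:
  assumes "\<And>k. k < n \<Longrightarrow> a k = b k"
  shows "merge_deck a n = merge_deck b n"
proof -
  have image_eq: "image_mset a (mset_set Q) = image_mset b (mset_set Q)" if "Q \<subseteq> {..<n}" for Q
    using that assms finite_subset[OF that] by (intro image_mset_cong) auto
  have "merge_card a n P = merge_card b n P" if "P \<in> two_subsets n" for P
    using that image_eq[of P] image_eq[of "{..<n} - P"]
    unfolding merge_card_def merged_def two_subsets_def by auto
  then show ?thesis
    unfolding merge_deck_def by (intro image_mset_cong) simp
qed

lemma merge_deck_permute:
  assumes \<tau>: "\<tau> permutes {..<n}"
  shows "merge_deck (a \<circ> \<tau>) n = merge_deck a n"
proof -
  have inj: "inj \<tau>"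
    using permutes_inj[OF \<tau>] .
  have reindex: "image_mset (a \<circ> \<tau>) (mset_set Q) = image_mset a (mset_set (\<tau> ` Q))" for Q
    using inj_on_subset[OF inj subset_UNIV] by (simp add: multiset.map_comp[symmetric] image_mset_mset_set)
  have "\<tau> ` ({..<n} - P) = {..<n} - \<tau> ` P" for P
    using permutes_image[OF \<tau>] by (simp add: image_set_diff[OF inj])
  then have card_permute: "merge_card (a \<circ> \<tau>) n P = merge_card a n (\<tau> ` P)" for P
    unfolding merge_card_def merged_def by (simp add: reindex)
  have inj_image: "inj_on ((`) \<tau>) (two_subsets n)"
    using inj by (simp add: inj_on_def inj_image_eq_iff)
  have "(`) \<tau> ` two_subsets n \<subseteq> two_subsets n"
    using permutes_image[OF \<tau>] inj_on_subset[OF inj subset_UNIV]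
    by (auto simp: two_subsets_def card_image)
  moreover have "card ((`) \<tau> ` two_subsets n) = card (two_subsets n)"
    using card_image[OF inj_image] .
  ultimately have "(`) \<tau> ` two_subsets n = two_subsets n"
    by (simp add: card_subset_eq)
  then have subsets_permuted: "image_mset ((`) \<tau>) (mset_set (two_subsets n)) = mset_set (two_subsets n)"
    by (simp add: image_mset_mset_set[OF inj_image])
  have "merge_card (a \<circ> \<tau>) n = merge_card a n \<circ> (`) \<tau>"
    by (simp add: fun_eq_iff card_permute)
  then have "merge_deck (a \<circ> \<tau>) n = image_mset (merge_card a n) (image_mset ((`) \<tau>) (mset_set (two_subsets n)))"
    unfolding merge_deck_def by (simp add: multiset.map_comp)
  then show ?thesis
    unfolding subsets_permuted merge_deck_def .
qed

lemma image_mset_eq_imp_merge_deck_eq: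
  assumes "image_mset a (mset_set {..<n}) = image_mset b (mset_set {..<n})"
  shows "merge_deck a n = merge_deck b n"
proof -
  obtain p where p: "p permutes {..<n}" "\<forall>k\<in>{..<n}. a k = b (p k)"
    using image_mset_eq_implies_permutes[OF finite_lessThan assms] by blast
  have "merge_deck a n = merge_deck (b \<circ> p) n"
    using p(2) by (intro merge_deck_cong) simp
  also have "\<dots> = merge_deck b n"
    by (rule merge_deck_permute[OF p(1)])
  finally show ?thesis .
qed

lemma sum_merge_cards:
  "(\<Sum>P\<in>two_subsets n. merge_card a n P)
     = repeat_mset ((n - 1) choose 2) (image_mset a (mset_set {..<n}))
       + image_mset (merged a) (mset_set (two_subsets n))"
proof -
  have "merge_card a n P = image_mset a (mset_set ({..<n} - P)) + {#merged a P#}" for P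
    by (simp add: merge_card_def)
  then have "(\<Sum>P\<in>two_subsets n. merge_card a n P)
      = (\<Sum>P\<in>two_subsets n. image_mset a (mset_set ({..<n} - P))) + (\<Sum>P\<in>two_subsets n. {#merged a P#})"
    by (simp only: sum.distrib)
  also have "(\<Sum>P\<in>two_subsets n. image_mset a (mset_set ({..<n} - P)))
      = image_mset a (\<Sum>P\<in>two_subsets n. mset_set ({..<n} - P))"
    using sum_comp_morphism[of "image_mset a" "\<lambda>P. mset_set ({..<n} - P)", OF image_mset_empty image_mset_union]
    by (simp add: comp_def)
  also have "\<dots> = repeat_mset ((n - 1) choose 2) (image_mset a (mset_set {..<n}))"
    by (simp only: sum_mset_set_diff_two_subsets image_mset_repeat_mset)
  also have "(\<Sum>P\<in>two_subsets n. {#merged a P#}) = image_mset (merged a) (mset_set (two_subsets n))"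
    by (subst sum_unfold_sum_mset) (rule sum_mset_singleton_mset)
  finally show ?thesis .
qed

lemma merge_deck_eq_mismatch_part:
  assumes deck: "merge_deck a n = merge_deck b n"
    and J: "J = {k \<in> {..<n}. a k \<noteq> b k}"
  shows "repeat_mset ((n - 1) choose 2) (image_mset a (mset_set J)) + image_mset (merged a) (mset_set (meeting n J))
       = repeat_mset ((n - 1) choose 2) (image_mset b (mset_set J)) + image_mset (merged b) (mset_set (meeting n J))"
proof -
  define I where "I = {..<n} - J"
  define avoiding where "avoiding = {P \<in> two_subsets n. P \<inter> J = {}}"
  have finite: "finite I" "finite J" "finite avoiding" "finite (meeting n J)"
    unfolding I_def J avoiding_def meeting_def by auto
  have "I \<union> J = {..<n}" "I \<inter> J = {}"
    unfolding I_def J by auto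
  then have positions: "mset_set {..<n} = mset_set I + mset_set J"
    using mset_set_Union[OF finite(1,2)] by simp
  have "avoiding \<union> meeting n J = two_subsets n" "avoiding \<inter> meeting n J = {}"
    unfolding avoiding_def meeting_def by auto
  then have pairs: "mset_set (two_subsets n) = mset_set avoiding + mset_set (meeting n J)"
    using mset_set_Union[OF finite(3,4)] by simp
  have agree_I: "image_mset a (mset_set I) = image_mset b (mset_set I)"
  proof (rule image_mset_cong)
    fix k
    assume "k \<in># mset_set I"
    then show "a k = b k"
      using finite(1) unfolding I_def J by simp
  qed
  have "merged a P = merged b P" if "P \<in> avoiding" for P
  proof -
    have "P \<subseteq> I"
      using that unfolding avoiding_def two_subsets_def I_def by auto
    then have "finite P" "\<And>k. k \<in> P \<Longrightarrow> a k = b k"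
      using finite_subset[OF _ finite(1)] unfolding I_def J by auto
    then show ?thesis
      unfolding merged_def by (intro arg_cong[where f = F] image_mset_cong) simp
  qed
  then have agree_avoiding: "image_mset (merged a) (mset_set avoiding) = image_mset (merged b) (mset_set avoiding)"
    using finite(3) by (intro image_mset_cong) auto
  have "(\<Sum>P\<in>two_subsets n. merge_card a n P) = (\<Sum>P\<in>two_subsets n. merge_card b n P)"
    using arg_cong[OF deck, of sum_mset] unfolding merge_deck_def by (simp add: sum_unfold_sum_mset)
  moreover have "(\<Sum>P\<in>two_subsets n. merge_card c n P)
      = (repeat_mset ((n - 1) choose 2) (image_mset c (mset_set I)) + image_mset (merged c) (mset_set avoiding))
        + (repeat_mset ((n - 1) choose 2) (image_mset c (mset_set J)) + image_mset (merged c) (mset_set (meeting n J)))"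
    for c
    unfolding sum_merge_cards positions pairs image_mset_union repeat_mset_distrib2 by (simp add: ac_simps)
  ultimately show ?thesis
    by (simp add: agree_I agree_avoiding)
qed

lemma merge_deck_eq_mismatch_values:
  assumes n: "4 \<le> n" and deck: "merge_deck a n = merge_deck b n"
    and J: "J = {k \<in> {..<n}. a k \<noteq> b k}" "J \<noteq> {}"
    and disjoint: "\<And>k l. k \<in> J \<Longrightarrow> l \<in> J \<Longrightarrow> a k \<noteq> b l"
  obtains q where "n = 4" "J = {q}"
    "image_mset (merged b) (mset_set (meeting n J)) = replicate_mset 3 (a q)"
proof -
  define N where "N = (n - 1) choose 2"
  have J_sub: "J \<subseteq> {..<n}" and "finite J"
    using J(1) by auto
  have "a ` J \<inter> b ` J = {}"
    using disjoint by blast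
  then have "set_mset (image_mset a (mset_set J)) \<inter> set_mset (image_mset b (mset_set J)) = {}"
    using \<open>finite J\<close> by (simp only: set_image_mset finite_set_mset_mset_set)
  from repeat_mset_subseteq_of_eq[OF merge_deck_eq_mismatch_part[OF deck J(1)] this]
  have sub: "repeat_mset N (image_mset a (mset_set J)) \<subseteq># image_mset (merged b) (mset_set (meeting n J))"
    unfolding N_def .
  have "N * card J \<le> card (meeting n J)"
    using size_mset_mono[OF sub] by simp
  then have bound: "((n - 1) choose 2) * card J \<le> (n choose 2) - ((n - card J) choose 2)"
    unfolding N_def card_meeting[OF J_sub] .
  have "1 \<le> card J"
    using J(2) \<open>finite J\<close> by (simp add: Suc_le_eq card_gt_0_iff)
  moreover have "card J \<le> n"
    using card_mono[OF finite_lessThan J_sub] by simp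
  ultimately have "n = 4 \<and> card J = 1"
    by (rule choose_two_times_bound[OF n _ _ bound])
  then have "n = 4" "card J = 1"
    by simp_all
  then obtain q where q: "J = {q}"
    using card_1_singletonE by blast
  have repeated: "repeat_mset N (image_mset a (mset_set J)) = replicate_mset 3 (a q)"
    using \<open>n = 4\<close> q unfolding N_def by (simp add: choose_two)
  have "size (image_mset (merged b) (mset_set (meeting n J))) = 3"
    using \<open>n = 4\<close> q card_meeting[OF J_sub] by (simp add: choose_two)
  moreover obtain C where C: "image_mset (merged b) (mset_set (meeting n J)) = replicate_mset 3 (a q) + C"
    using sub unfolding repeated mset_subset_eq_exists_conv by blast
  ultimately have "C = {#}"
    by simp
  with C have "image_mset (merged b) (mset_set (meeting n J)) = replicate_mset 3 (a q)"
    by simp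
  with \<open>n = 4\<close> q show thesis
    by (rule that)
qed

lemma merge_deck_eq_mismatch:
  assumes n: "4 \<le> n" and deck: "merge_deck a n = merge_deck b n"
    and J: "J = {k \<in> {..<n}. a k \<noteq> b k}" "J \<noteq> {}"
    and disjoint: "\<And>k l. k \<in> J \<Longrightarrow> l \<in> J \<Longrightarrow> a k \<noteq> b l"
  obtains q where "n = 4" "J = {q}" "\<And>k. k < n \<Longrightarrow> k \<noteq> q \<Longrightarrow> b q \<^bold>* a k = a q"
proof -
  obtain q where "n = 4" and q: "J = {q}"
    and merged_values: "image_mset (merged b) (mset_set (meeting n J)) = replicate_mset 3 (a q)"
    using merge_deck_eq_mismatch_values[OF assms] by metis
  have J_sub: "J \<subseteq> {..<n}"
    using J(1) by auto
  show thesis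
  proof (rule that[OF \<open>n = 4\<close> q])
    fix k
    assume k: "k < n" "k \<noteq> q"
    have "{q, k} \<in> meeting n J"
      using k q J_sub by (auto simp: meeting_def two_subsets_def)
    then have "merged b {q, k} \<in># replicate_mset 3 (a q)"
      unfolding merged_values[symmetric] by simp
    then have "merged b {q, k} = a q"
      by simp
    moreover have "k \<notin> J"
      using k(2) q by simp
    then have "b k = a k"
      using k(1) J(1) by simp
    ultimately show "b q \<^bold>* a k = a q"
      using k(2) by (simp add: merged_doubleton)
  qed
qed

lemma F_alternating:
  assumes "\<And>c. c \<in># R \<Longrightarrow> x \<^bold>* c = y \<and> y \<^bold>* c = x"
  shows "x \<^bold>* F R = (if even (size R) then x else y)"
  using assms
proof (induction R arbitrary: x y)
  case empty
  then show ?case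
    by simp
next
  case (add c R)
  have "x \<^bold>* F (add_mset c R) = (x \<^bold>* c) \<^bold>* F R"
    by (simp add: assoc)
  also have "x \<^bold>* c = y"
    using add.prems[of c] by simp
  also have "y \<^bold>* F R = (if even (size R) then y else x)"
  proof (rule add.IH)
    fix c'
    assume "c' \<in># R"
    then have "c' \<in># add_mset c R"
      by simp
    then show "y \<^bold>* c' = x \<and> x \<^bold>* c' = y"
      using add.prems by blast
  qed
  finally show ?case
    by simp
qed

lemma merge_deck_eq_imp_F_eq:
  assumes "2 \<le> n" "merge_deck a n = merge_deck b n"
  shows "F (image_mset a (mset_set {..<n})) = F (image_mset b (mset_set {..<n}))"
proof -
  have "{0, 1} \<in> two_subsets n"
    using assms(1) by (rule doubleton_in_two_subsets)
  then have "merge_card a n {0, 1} \<in># merge_deck b n"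
    using assms(2) unfolding merge_deck_def by (metis finite_two_subsets elem_mset_set imageI set_image_mset)
  then obtain P where "P \<in> two_subsets n" "merge_card a n {0, 1} = merge_card b n P"
    unfolding merge_deck_def by auto
  then show ?thesis
    using F_merge_card[of "{0, 1}" n a] F_merge_card[of P n b] assms(1)
    by (auto simp: two_subsets_def)
qed

lemma F_image_mset_swap:
  fixes n q :: nat
  assumes "even n" "q < n"
    and swap: "\<And>k. k < n \<Longrightarrow> k \<noteq> q \<Longrightarrow> a q \<^bold>* a k = y \<and> y \<^bold>* a k = a q"
  shows "F (image_mset a (mset_set {..<n})) = y"
proof -
  define R where "R = image_mset a (mset_set ({..<n} - {q}))"
  have "mset_set {..<n} = add_mset q (mset_set ({..<n} - {q}))"
    using assms(2) by (simp add: mset_set.remove)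
  then have "F (image_mset a (mset_set {..<n})) = a q \<^bold>* F R"
    unfolding R_def by simp
  also have "\<dots> = (if even (size R) then a q else y)"
  proof (rule F_alternating)
    fix c
    assume "c \<in># R"
    then have "c \<in> a ` ({..<n} - {q})"
      unfolding R_def by simp
    then show "a q \<^bold>* c = y \<and> y \<^bold>* c = a q"
      using swap by blast
  qed
  also have "\<dots> = y"
    using assms(1,2) by (simp add: R_def)
  finally show ?thesis .
qed

lemma merge_deck_eq_imp_agree:
  assumes n: "4 \<le> n" and deck: "merge_deck a n = merge_deck b n"
    and disjoint: "\<And>k l. k < n \<Longrightarrow> l < n \<Longrightarrow> a k \<noteq> b k \<Longrightarrow> a l \<noteq> b l \<Longrightarrow> a k \<noteq> b l"
    and "k < n"
  shows "a k = b k"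
proof (rule ccontr)
  define J where "J = {k \<in> {..<n}. a k \<noteq> b k}"
  assume "a k \<noteq> b k"
  then have "J \<noteq> {}"
    using \<open>k < n\<close> unfolding J_def by blast
  have disjoint_J: "a k \<noteq> b l" if "k \<in> J" "l \<in> J" for k l
    using disjoint that unfolding J_def by blast
  obtain q where "n = 4" "J = {q}" and to_a: "\<And>k. k < n \<Longrightarrow> k \<noteq> q \<Longrightarrow> b q \<^bold>* a k = a q"
    using merge_deck_eq_mismatch[OF n deck J_def \<open>J \<noteq> {}\<close> disjoint_J] by metis
  have J': "J = {k \<in> {..<n}. b k \<noteq> a k}"
    unfolding J_def by (rule Collect_cong) auto
  have disjoint_J': "b k \<noteq> a l" if "k \<in> J" "l \<in> J" for k l
    using disjoint_J[OF that(2,1)] by simp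
  obtain q' where "J = {q'}" and to_b: "\<And>k. k < n \<Longrightarrow> k \<noteq> q' \<Longrightarrow> a q' \<^bold>* b k = b q'"
    using merge_deck_eq_mismatch[OF n deck[symmetric] J' \<open>J \<noteq> {}\<close> disjoint_J'] by metis
  then have to_b: "\<And>k. k < n \<Longrightarrow> k \<noteq> q \<Longrightarrow> a q \<^bold>* b k = b q"
    using \<open>J = {q}\<close> by simp
  have "q \<in> J"
    using \<open>J = {q}\<close> by simp
  then have q: "q < n" "a q \<noteq> b q"
    unfolding J_def by simp_all
  have agree: "b k = a k" if "k < n" "k \<noteq> q" for k
  proof -
    have "k \<notin> J"
      using that(2) \<open>J = {q}\<close> by simp
    then show ?thesis
      using that(1) unfolding J_def by simp
  qed
  have "even n"
    using \<open>n = 4\<close> by simp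
  have "F (image_mset a (mset_set {..<n})) = b q"
    using to_a to_b agree by (intro F_image_mset_swap[OF \<open>even n\<close> q(1)]) simp
  moreover have "F (image_mset b (mset_set {..<n})) = a q"
    using to_a to_b agree by (intro F_image_mset_swap[OF \<open>even n\<close> q(1)]) simp
  ultimately show False
    using merge_deck_eq_imp_F_eq[OF _ deck] n q(2) by simp
qed

theorem merge_deck_eq_iff:
  assumes "4 \<le> n"
  shows "merge_deck a n = merge_deck b n \<longleftrightarrow>
           image_mset a (mset_set {..<n}) = image_mset b (mset_set {..<n})"
proof
  assume deck: "merge_deck a n = merge_deck b n"
  obtain \<tau> where \<tau>: "\<tau> permutes {..<n}"
    and disjoint: "\<And>k l. k < n \<Longrightarrow> l < n \<Longrightarrow> a k \<noteq> b (\<tau> k) \<Longrightarrow> a l \<noteq> b (\<tau> l) \<Longrightarrow> a k \<noteq> b (\<tau> l)"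
    using exists_permutes_mismatches_disjoint[of n a b] by blast
  have deck': "merge_deck a n = merge_deck (b \<circ> \<tau>) n"
    using deck merge_deck_permute[OF \<tau>] by simp
  have disjoint': "a k \<noteq> (b \<circ> \<tau>) l"
    if "k < n" "l < n" "a k \<noteq> (b \<circ> \<tau>) k" "a l \<noteq> (b \<circ> \<tau>) l" for k l
    using disjoint that by simp
  have "a k = (b \<circ> \<tau>) k" if "k < n" for k
    by (rule merge_deck_eq_imp_agree[OF assms deck' disjoint' that])
  then have "image_mset a (mset_set {..<n}) = image_mset (b \<circ> \<tau>) (mset_set {..<n})"
    by (intro image_mset_cong) simp
  also have "\<dots> = image_mset b (mset_set {..<n})"
    using permutes_implies_image_mset_eq[OF \<tau>, of "b \<circ> \<tau>" b] by simp
  finally show "image_mset a (mset_set {..<n}) = image_mset b (mset_set {..<n})" .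
next
  show "image_mset a (mset_set {..<n}) = image_mset b (mset_set {..<n}) \<Longrightarrow> merge_deck a n = merge_deck b n"
    by (rule image_mset_eq_imp_merge_deck_eq)
qed

definition minor_coeffs :: "(nat \<Rightarrow> 'a) \<Rightarrow> nat \<Rightarrow> nat \<Rightarrow> nat \<Rightarrow> 'a" where
  "minor_coeffs a i j k = (if k = i then a i \<^bold>* a j else a (skip j k))"

lemma image_mset_minor_coeffs:
  assumes "i < j" "j < n"
  shows "image_mset (minor_coeffs a i j) (mset_set {..<n - 1}) = merge_card a n {i, j}"
proof -
  have "mset_set {..<n - 1} = add_mset i (mset_set ({..<n - 1} - {i}))"
    using assms by (simp add: mset_set.remove)
  moreover have "image_mset (minor_coeffs a i j) (mset_set ({..<n - 1} - {i}))
      = image_mset (a \<circ> skip j) (mset_set ({..<n - 1} - {i}))"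
    by (intro image_mset_cong) (simp add: minor_coeffs_def)
  moreover have "\<dots> = image_mset a (mset_set ({..<n} - {i, j}))"
    using inj_on_subset[OF inj_skip subset_UNIV] skip_image[OF assms]
    by (simp add: multiset.map_comp[symmetric] image_mset_mset_set)
  ultimately show ?thesis
    using assms by (simp add: merge_card_def merged_doubleton minor_coeffs_def)
qed

end

section \<open>Affine functions over a nonassociative right semiring\<close>

locale nonassoc_right_semiring = msum: comm_monoid_mset add zero
  for add :: "'a \<Rightarrow> 'a \<Rightarrow> 'a" and zero :: 'a +
  fixes mul :: "'a \<Rightarrow> 'a \<Rightarrow> 'a" and one :: 'a
  assumes mul_one_right: "mul a one = a"
    and distrib_right: "mul (add a b) c = add (mul a c) (mul b c)"
    and mul_zero_right: "mul a zero = zero"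

lemma nars_imp_nonassoc_right_semiring:
  assumes "nars add mul z e"
  shows "nonassoc_right_semiring add z mul e"
  by unfold_locales (use assms[unfolded nars_def] in blast)+

context nonassoc_right_semiring
begin

definition affine_rep :: "nat \<Rightarrow> ('a list \<Rightarrow> 'a) \<Rightarrow> (nat \<Rightarrow> 'a) \<Rightarrow> 'a \<Rightarrow> bool" where
  "affine_rep m h a c \<longleftrightarrow> (\<forall>xs. length xs = m \<longrightarrow>
      h xs = add (msum.F (image_mset (\<lambda>k. mul (a k) (xs ! k)) (mset_set {..<m}))) c)"

lemma lsum_eq_F: "lsum add zero xs = msum.F (mset xs)"
  by (induction xs) (simp_all add: lsum_def)

lemma affine_iff_affine_rep: "affine add mul zero m h \<longleftrightarrow> (\<exists>a c. affine_rep m h a c)"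
  by (simp add: affine_def affine_rep_def lsum_eq_F atLeast0LessThan)

lemma linear_fun_iff_affine_rep: "linear_fun add mul zero m h \<longleftrightarrow> (\<exists>a. affine_rep m h a zero)"
  by (simp add: linear_fun_def affine_rep_def lsum_eq_F atLeast0LessThan)

lemma affine_rep_eq:
  assumes "affine_rep m h a c" "affine_rep m h' a' c" "\<And>k. k < m \<Longrightarrow> a k = a' k" "length xs = m"
  shows "h xs = h' xs"
proof -
  have "image_mset (\<lambda>k. mul (a k) (xs ! k)) (mset_set {..<m}) = image_mset (\<lambda>k. mul (a' k) (xs ! k)) (mset_set {..<m})"
    using assms(3) by (intro image_mset_cong) simp
  then show ?thesis
    using assms(1,2,4) unfolding affine_rep_def by simp
qed

lemma affine_rep_zero_vector:
  assumes "affine_rep m h a c"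
  shows "h (replicate m zero) = c"
proof -
  have "msum.F (image_mset (\<lambda>k. mul (a k) (replicate m zero ! k)) (mset_set {..<m})) = zero"
    by (rule msum.neutral) (simp add: mul_zero_right)
  then show ?thesis
    using assms unfolding affine_rep_def by simp
qed

lemma affine_rep_unit_vector:
  assumes "affine_rep m h a c" "k < m"
  shows "h ((replicate m zero)[k := one]) = add (a k) c"
proof -
  let ?x = "(replicate m zero)[k := one]"
  have "mset_set {..<m} = add_mset k (mset_set ({..<m} - {k}))"
    using assms(2) by (simp add: mset_set.remove)
  moreover have "msum.F (image_mset (\<lambda>i. mul (a i) (?x ! i)) (mset_set ({..<m} - {k}))) = zero"
    by (rule msum.neutral) (simp add: mul_zero_right)
  ultimately show ?thesis
    using assms unfolding affine_rep_def by (simp add: mul_one_right)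
qed

lemma affine_rep_unique:
  assumes "affine_rep m h a c" "affine_rep m h a' c'" "c = zero \<or> cancellative add"
  shows "c' = c \<and> (\<forall>k<m. a' k = a k)"
proof -
  have "c' = c"
    using affine_rep_zero_vector[OF assms(1)] affine_rep_zero_vector[OF assms(2)] by simp
  moreover have "a' k = a k" if "k < m" for k
  proof -
    have "add c (a' k) = add c (a k)"
      using affine_rep_unit_vector[OF assms(1) that] affine_rep_unit_vector[OF assms(2) that] \<open>c' = c\<close>
      by (simp add: msum.commute)
    then show ?thesis
      using assms(3) unfolding cancellative_def by auto
  qed
  ultimately show ?thesis
    by blast
qed

lemma affine_rep_permute_list:
  assumes h: "affine_rep m h b d" and \<sigma>: "\<sigma> permutes {..<m}"
  shows "affine_rep m (\<lambda>xs. h (permute_list \<sigma> xs)) (b \<circ> inv \<sigma>) d"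
  unfolding affine_rep_def
proof (intro allI impI)
  fix xs :: "'a list"
  assume len: "length xs = m"
  have "image_mset (\<lambda>k. mul (b k) (permute_list \<sigma> xs ! k)) (mset_set {..<m})
      = image_mset (\<lambda>k. mul ((b \<circ> inv \<sigma>) k) (xs ! k)) (mset_set {..<m})"
  proof (rule permutes_implies_image_mset_eq[OF permutes_inv[OF \<sigma>]])
    fix k :: nat
    assume "k \<in> {..<m}"
    then have "inv \<sigma> k < length xs"
      using permutes_in_image[OF permutes_inv[OF \<sigma>]] len by simp
    then show "mul ((b \<circ> inv \<sigma>) k) (xs ! k) = mul (b (inv \<sigma> k)) (permute_list \<sigma> xs ! inv \<sigma> k)"
      using \<sigma> len by (simp add: permute_list_nth permutes_inverses(1))
  qed
  then show "h (permute_list \<sigma> xs)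
      = add (msum.F (image_mset (\<lambda>k. mul ((b \<circ> inv \<sigma>) k) (xs ! k)) (mset_set {..<m}))) d"
    using h len unfolding affine_rep_def by simp
qed

lemma fequiv_affine_iff:
  assumes h: "affine_rep m h a c" and h': "affine_rep m h' b d" and c: "c = zero \<or> cancellative add"
  shows "fequiv m h h' \<longleftrightarrow> image_mset a (mset_set {..<m}) = image_mset b (mset_set {..<m}) \<and> c = d"
proof
  assume "fequiv m h h'"
  then obtain \<sigma> where \<sigma>: "\<sigma> permutes {..<m}" and eq: "\<And>xs. length xs = m \<Longrightarrow> h xs = h' (permute_list \<sigma> xs)"
    unfolding fequiv_iff_permute_list by blast
  have "affine_rep m h (b \<circ> inv \<sigma>) d"
    using affine_rep_permute_list[OF h' \<sigma>] eq unfolding affine_rep_def by simp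
  then have "d = c \<and> (\<forall>k<m. (b \<circ> inv \<sigma>) k = a k)"
    by (rule affine_rep_unique[OF h _ c])
  moreover have "image_mset b (mset_set {..<m}) = image_mset a (mset_set {..<m})"
    if "\<forall>k<m. (b \<circ> inv \<sigma>) k = a k"
    using that by (intro permutes_implies_image_mset_eq[OF permutes_inv[OF \<sigma>]]) simp
  ultimately show "image_mset a (mset_set {..<m}) = image_mset b (mset_set {..<m}) \<and> c = d"
    by simp
next
  assume "image_mset a (mset_set {..<m}) = image_mset b (mset_set {..<m}) \<and> c = d"
  then have image: "image_mset a (mset_set {..<m}) = image_mset b (mset_set {..<m})" and "c = d"
    by simp_all
  obtain p where p: "p permutes {..<m}" "\<forall>k\<in>{..<m}. a k = b (p k)"
    using image_mset_eq_implies_permutes[OF finite_lessThan image] by blast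
  have "affine_rep m (\<lambda>xs. h' (permute_list (inv p) xs)) (b \<circ> p) d"
    using affine_rep_permute_list[OF h' permutes_inv[OF p(1)]] inv_inv_eq[OF permutes_bij[OF p(1)]] by simp
  then have "h xs = h' (permute_list (inv p) xs)" if "length xs = m" for xs
    using affine_rep_eq[OF h] p(2) \<open>c = d\<close> that by simp
  then show "fequiv m h h'"
    unfolding fequiv_iff_permute_list using permutes_inv[OF p(1)] by blast
qed

definition affine_classes :: "nat \<Rightarrow> ('a list \<Rightarrow> 'a) set set" where
  "affine_classes m = {fclass m h | h. \<exists>a c. affine_rep m h a c \<and> (c = zero \<or> cancellative add)}"

text \<open>The description is unique only for classes in \<open>affine_classes m\<close>, which is all that is
  used below.\<close>

definition affine_class_key :: "nat \<Rightarrow> ('a list \<Rightarrow> 'a) set \<Rightarrow> 'a multiset \<times> 'a" where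
  "affine_class_key m C =
     (THE key. \<exists>h a c. h \<in> C \<and> affine_rep m h a c \<and> key = (image_mset a (mset_set {..<m}), c))"

lemma affine_class_key_fclass:
  assumes "affine_rep m h a c" "c = zero \<or> cancellative add"
  shows "affine_class_key m (fclass m h) = (image_mset a (mset_set {..<m}), c)"
  unfolding affine_class_key_def
proof (rule the_equality)
  show "\<exists>h' a' c'. h' \<in> fclass m h \<and> affine_rep m h' a' c'
      \<and> (image_mset a (mset_set {..<m}), c) = (image_mset a' (mset_set {..<m}), c')"
    using assms(1) fequiv_refl unfolding fclass_def by blast
next
  fix key
  assume "\<exists>h' a' c'. h' \<in> fclass m h \<and> affine_rep m h' a' c' \<and> key = (image_mset a' (mset_set {..<m}), c')"
  then obtain h' a' c' where "fequiv m h h'" "affine_rep m h' a' c'"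
    and key: "key = (image_mset a' (mset_set {..<m}), c')"
    unfolding fclass_def by blast
  then show "key = (image_mset a (mset_set {..<m}), c)"
    using fequiv_affine_iff[OF assms(1) _ assms(2)] by simp
qed

lemma inj_on_affine_class_key: "inj_on (affine_class_key m) (affine_classes m)"
proof (rule inj_onI)
  fix C C'
  assume "C \<in> affine_classes m" "C' \<in> affine_classes m"
    and key: "affine_class_key m C = affine_class_key m C'"
  then obtain h a c h' a' c' where C: "C = fclass m h" "affine_rep m h a c" "c = zero \<or> cancellative add"
    and C': "C' = fclass m h'" "affine_rep m h' a' c'" "c' = zero \<or> cancellative add"
    unfolding affine_classes_def by blast
  have "fequiv m h h'"
    using key affine_class_key_fclass[OF C(2,3)] affine_class_key_fclass[OF C'(2,3)]
    unfolding C(1) C'(1) fequiv_affine_iff[OF C(2) C'(2) C(3)] by simp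
  then show "C = C'"
    unfolding C(1) C'(1) by (rule fclass_eq)
qed

lemma affine_rep_minor:
  assumes f: "affine_rep n f a c" and ij: "i < j" "j < n"
  shows "affine_rep (n - 1) (minor f i j) (msum.minor_coeffs a i j) c"
  unfolding affine_rep_def
proof (intro allI impI)
  fix xs :: "'a list"
  assume len: "length xs = n - 1"
  define L where "L = take j xs @ [xs ! i] @ drop j xs"
  have "j \<le> length xs"
    using ij len by simp
  note L = nth_minor_arguments[OF ij(1) this, folded L_def, unfolded len]
  have "length L = n"
    using L(1) ij by simp
  define \<phi> where "\<phi> k = mul (a k) (L ! k)" for k
  define \<psi> where "\<psi> k = mul (msum.minor_coeffs a i j k) (xs ! k)" for k
  note positions = mset_set_lessThan_remove2[OF ij]
  have minor_positions: "mset_set {..<n - 1} = add_mset i (mset_set ({..<n - 1} - {i}))"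
    using ij by (simp add: mset_set.remove)
  have "image_mset \<psi> (mset_set ({..<n - 1} - {i})) = image_mset (\<phi> \<circ> skip j) (mset_set ({..<n - 1} - {i}))"
    by (intro image_mset_cong) (simp add: \<psi>_def \<phi>_def msum.minor_coeffs_def L(2))
  also have "\<dots> = image_mset \<phi> (mset_set ({..<n} - {i, j}))"
    using inj_on_subset[OF inj_skip subset_UNIV] skip_image[OF ij]
    by (simp add: multiset.map_comp[symmetric] image_mset_mset_set)
  finally have rest: "image_mset \<psi> (mset_set ({..<n - 1} - {i})) = image_mset \<phi> (mset_set ({..<n} - {i, j}))" .
  have merged: "\<psi> i = add (\<phi> i) (\<phi> j)"
    unfolding \<psi>_def \<phi>_def msum.minor_coeffs_def by (simp add: distrib_right L(3,4))
  have "minor f i j xs = f L"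
    unfolding minor_def L_def ..
  also have "\<dots> = add (msum.F (image_mset \<phi> (mset_set {..<n}))) c"
    using f \<open>length L = n\<close> unfolding affine_rep_def \<phi>_def by simp
  also have "msum.F (image_mset \<phi> (mset_set {..<n})) = msum.F (image_mset \<psi> (mset_set {..<n - 1}))"
    unfolding positions minor_positions image_mset_add_mset msum.add_mset rest merged
    by (simp only: msum.assoc)
  finally show "minor f i j xs = add (msum.F (image_mset (\<lambda>k. mul (msum.minor_coeffs a i j k) (xs ! k)) (mset_set {..<n - 1}))) c"
    unfolding \<psi>_def .
qed

lemma deck_affine_class_key:
  assumes f: "affine_rep n f a c" and c: "c = zero \<or> cancellative add"
  shows "set_mset (deck n f) \<subseteq> affine_classes (n - 1)"
    and "image_mset (affine_class_key (n - 1)) (deck n f) = image_mset (\<lambda>M. (M, c)) (msum.merge_deck a n)"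
proof -
  have pair: "\<exists>i j. p = (i, j) \<and> affine_rep (n - 1) (minor f i j) (msum.minor_coeffs a i j) c
      \<and> image_mset (msum.minor_coeffs a i j) (mset_set {..<n - 1}) = msum.merge_card a n {i, j}"
    if p: "p \<in># mset_set {(i, j). i < j \<and> j < n}" for p
  proof -
    obtain i j where "p = (i, j)" "i < j" "j < n"
      using p finite_pairs by auto
    then show ?thesis
      using affine_rep_minor[OF f] msum.image_mset_minor_coeffs by blast
  qed
  show "set_mset (deck n f) \<subseteq> affine_classes (n - 1)"
  proof
    fix C
    assume "C \<in># deck n f"
    then obtain p where "p \<in># mset_set {(i, j). i < j \<and> j < n}" "C = (\<lambda>(i, j). fclass (n - 1) (minor f i j)) p"
      unfolding deck_def set_image_mset by blast
    then show "C \<in> affine_classes (n - 1)"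
      using pair c unfolding affine_classes_def by fastforce
  qed
  have "image_mset (affine_class_key (n - 1)) (deck n f)
      = image_mset (\<lambda>(i, j). (msum.merge_card a n {i, j}, c)) (mset_set {(i, j). i < j \<and> j < n})"
    unfolding deck_def multiset.map_comp
  proof (rule image_mset_cong)
    fix p
    assume "p \<in># mset_set {(i, j). i < j \<and> j < n}"
    then obtain i j where "p = (i, j)" "affine_rep (n - 1) (minor f i j) (msum.minor_coeffs a i j) c"
      "image_mset (msum.minor_coeffs a i j) (mset_set {..<n - 1}) = msum.merge_card a n {i, j}"
      using pair by blast
    then show "(affine_class_key (n - 1) \<circ> (\<lambda>(i, j). fclass (n - 1) (minor f i j))) p
        = (\<lambda>(i, j). (msum.merge_card a n {i, j}, c)) p"
      using affine_class_key_fclass[OF _ c] by simp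
  qed
  also have "\<dots> = image_mset (\<lambda>M. (M, c)) (msum.merge_deck a n)"
    unfolding msum.merge_deck_def multiset.map_comp comp_def
    by (rule image_mset_pairs_eq_two_subsets)
  finally show "image_mset (affine_class_key (n - 1)) (deck n f) = image_mset (\<lambda>M. (M, c)) (msum.merge_deck a n)" .
qed

lemma deck_eq_iff_merge_deck_eq:
  assumes "2 \<le> n"
    and f: "affine_rep n f a c" "c = zero \<or> cancellative add"
    and g: "affine_rep n g b d" "d = zero \<or> cancellative add"
  shows "deck n f = deck n g \<longleftrightarrow> msum.merge_deck a n = msum.merge_deck b n \<and> c = d"
proof -
  have "deck n f = deck n g
      \<longleftrightarrow> image_mset (affine_class_key (n - 1)) (deck n f) = image_mset (affine_class_key (n - 1)) (deck n g)"
    using image_mset_eq_iff_inj_on[OF inj_on_affine_class_key deck_affine_class_key(1)[OF f] deck_affine_class_key(1)[OF g]]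
    by simp
  also have "\<dots> \<longleftrightarrow> image_mset (\<lambda>M. (M, c)) (msum.merge_deck a n) = image_mset (\<lambda>M. (M, d)) (msum.merge_deck b n)"
    by (simp only: deck_affine_class_key(2)[OF f] deck_affine_class_key(2)[OF g])
  also have "\<dots> \<longleftrightarrow> msum.merge_deck a n = msum.merge_deck b n \<and> c = d"
  proof
    assume eq: "image_mset (\<lambda>M. (M, c)) (msum.merge_deck a n) = image_mset (\<lambda>M. (M, d)) (msum.merge_deck b n)"
    have "msum.merge_deck a n = msum.merge_deck b n"
      using arg_cong[OF eq, of "image_mset fst"] by (simp add: multiset.map_comp comp_def)
    moreover have "msum.merge_card a n {0, 1} \<in># msum.merge_deck a n"
      using doubleton_in_two_subsets[OF assms(1)] unfolding msum.merge_deck_def by simp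
    then have "(msum.merge_card a n {0, 1}, c) \<in># image_mset (\<lambda>M. (M, d)) (msum.merge_deck b n)"
      unfolding eq[symmetric] by simp
    then have "c = d"
      by auto
    ultimately show "msum.merge_deck a n = msum.merge_deck b n \<and> c = d" ..
  qed simp
  finally show ?thesis .
qed

end

theorem mainTheorem12:
  fixes add mul :: "'a \<Rightarrow> 'a \<Rightarrow> 'a" and z e :: 'a
    and n :: nat and f g :: "'a list \<Rightarrow> 'a"
  assumes "nars add mul z e"
    and "n \<ge> 4"
    and "affine add mul z n f" and "affine add mul z n g"
    and "(linear_fun add mul z n f \<and> linear_fun add mul z n g) \<or> cancellative add"
  shows "deck n f = deck n g \<longleftrightarrow> fequiv n f g"
proof -
  interpret nonassoc_right_semiring add z mul e
    by (rule nars_imp_nonassoc_right_semiring[OF assms(1)])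
  obtain a c b d where f: "affine_rep n f a c" "c = z \<or> cancellative add"
    and g: "affine_rep n g b d" "d = z \<or> cancellative add"
  proof (cases "cancellative add")
    case True
    then show thesis
      using that assms(3,4) unfolding affine_iff_affine_rep by blast
  next
    case False
    then show thesis
      using that assms(5) unfolding linear_fun_iff_affine_rep by blast
  qed
  have "deck n f = deck n g \<longleftrightarrow> msum.merge_deck a n = msum.merge_deck b n \<and> c = d"
    using assms(2) by (intro deck_eq_iff_merge_deck_eq f g) simp
  also have "\<dots> \<longleftrightarrow> image_mset a (mset_set {..<n}) = image_mset b (mset_set {..<n}) \<and> c = d"
    using msum.merge_deck_eq_iff[OF assms(2)] by simp
  also have "\<dots> \<longleftrightarrow> fequiv n f g"
    using fequiv_affine_iff[OF f(1) g(1) f(2)] by simp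
  finally show ?thesis .
qed

end
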